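(* Let $x$ be a positive integer. Then both $6x-1$ and $6x+1$ are prime if and only if there is no prime $p \geq 5$ with $p < 6x-1$ such that $x \equiv -\kappa(p) \pmod{p}$ or $x \equiv +\kappa(p) \pmod{p}$.
   Context: For a prime $p \geq 5$ define $\kappa(p) = \frac{p+1}{6}$ if $p \equiv -1 \pmod 6$ and $\kappa(p) = \frac{p-1}{6}$ if $p \equiv +1 \pmod 6$ (so $p = 6\kappa(p) \mp 1$ is an integer of the form $6k\pm 1$ with $k=\kappa(p)$). *)

theory Defs
  imports "HOL-Number_Theory.Number_Theory"
begin

definition kappa :: "nat \<Rightarrow> nat" where
  "kappa p = (if p mod 6 = 5 then (p + 1) div 6 else (p - 1) div 6)"

end

theory Submission
  imports Defs
begin

text \<open>Since \<open>6 \<kappa>(p) \<equiv> \<plusminus>1 (mod p)\<close> and 6 is invertible modulo a prime \<open>p \<ge> 5\<close>, the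
  congruence \<open>x \<equiv> \<plusminus>\<kappa>(p) (mod p)\<close> says exactly that \<open>p\<close> divides \<open>6x - 1\<close> or \<open>6x + 1\<close>.
  A composite \<open>6x \<plusminus> 1\<close> has a prime factor of at most half its size; that factor is
  at least 5 because \<open>6x \<plusminus> 1\<close> is coprime to 6, and below \<open>6x - 1\<close>. Conversely a prime
  below \<open>6x - 1\<close> cannot divide a prime \<open>6x \<plusminus> 1\<close>.\<close>

lemma prime_ge_5_mod_6:
  fixes p :: nat
  assumes "prime p" "5 \<le> p"
  shows "p mod 6 = 1 \<or> p mod 6 = 5"
proof -
  have "\<not> 2 dvd p" "\<not> 3 dvd p"
    using assms primes_dvd_imp_eq[of 2 p] primes_dvd_imp_eq[of 3 p] by auto
  then show ?thesis by presburger
qed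

lemma coprime_6_prime_ge_5:
  fixes p :: nat
  assumes "prime p" "5 \<le> p"
  shows "coprime 6 (int p)"
proof -
  have "\<not> p dvd 6"
  proof
    assume "p dvd 6"
    then have "p = 5 \<or> p = 6"
      using assms(2) dvd_imp_le[of p 6] by auto
    with \<open>p dvd 6\<close> assms(1) show False
      by auto
  qed
  then have "coprime p 6"
    using assms(1) prime_imp_coprime by blast
  then show ?thesis
    by (metis coprime_commute coprime_int_iff of_nat_numeral)
qed

lemma six_mult_kappa_cong_pm_1:
  fixes p :: nat
  assumes "prime p" "5 \<le> p"
  shows "[6 * int (kappa p) = 1] (mod int p) \<or> [6 * int (kappa p) = - 1] (mod int p)"
  using prime_ge_5_mod_6[OF assms]
proof
  assume "p mod 6 = 1"
  then have "6 * kappa p + 1 = p"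
    unfolding kappa_def by presburger
  then have "6 * int (kappa p) = int p - 1"
    by linarith
  then show ?thesis
    by (simp add: cong_iff_dvd_diff)
next
  assume "p mod 6 = 5"
  then have "6 * kappa p = p + 1"
    unfolding kappa_def by presburger
  then have "6 * int (kappa p) = int p + 1"
    by linarith
  then show ?thesis
    by (simp add: cong_iff_dvd_diff)
qed

lemma cong_kappa_iff_dvd_six_mult_pm_1:
  fixes p :: nat and x :: int
  assumes "prime p" "5 \<le> p"
  shows "([x = - int (kappa p)] (mod int p) \<or> [x = int (kappa p)] (mod int p)) \<longleftrightarrow>
    (int p dvd 6 * x - 1 \<or> int p dvd 6 * x + 1)"
proof -
  define k where "k = int (kappa p)"
  obtain e where e: "[6 * k = e] (mod int p)" "e = 1 \<or> e = - 1"
    using six_mult_kappa_cong_pm_1[OF assms] unfolding k_def by blast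
  have cancel: "[x = y] (mod int p) \<longleftrightarrow> [6 * x = 6 * y] (mod int p)" for y
    using cong_mult_lcancel[OF coprime_6_prime_ge_5[OF assms]] by simp
  have "[x = k] (mod int p) \<longleftrightarrow> [6 * x = e] (mod int p)"
    using cancel[of k] e(1) cong_trans cong_sym by metis
  also have "\<dots> \<longleftrightarrow> int p dvd 6 * x - e"
    by (rule cong_iff_dvd_diff)
  finally have plus: "[x = k] (mod int p) \<longleftrightarrow> int p dvd 6 * x - e" .
  have "[x = - k] (mod int p) \<longleftrightarrow> [6 * x = - e] (mod int p)"
    using cancel[of "- k"] e(1) cong_minus_minus_iff cong_trans cong_sym
    by (metis mult_minus_right)
  also have "\<dots> \<longleftrightarrow> int p dvd 6 * x + e"
    by (simp add: cong_iff_dvd_diff)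
  finally have minus: "[x = - k] (mod int p) \<longleftrightarrow> int p dvd 6 * x + e" .
  from e(2) show ?thesis
    using plus minus unfolding k_def by auto
qed

lemma not_prime_imp_prime_factor_le_half:
  fixes n :: nat
  assumes "1 < n" "\<not> prime n"
  obtains q where "prime q" "q dvd n" "2 * q \<le> n"
proof -
  obtain d where d: "d dvd n" "d \<noteq> 1" "d \<noteq> n"
    using assms prime_nat_iff by auto
  then obtain e where e: "n = d * e"
    by blast
  have "e \<noteq> 0"
    using assms(1) e by (metis mult_0_right not_less_zero)
  moreover have "e \<noteq> 1"
    using d(3) e by auto
  ultimately have "2 * d \<le> n"
    using e by simp
  obtain q where q: "prime q" "q dvd d"
    using prime_factor_nat d(2) by blast
  have "q \<le> d"
    using q(2) d(1) assms(1) by (metis dvd_imp_le dvd_0_left_iff not_gr0 not_less0)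
  show thesis
    using that q d(1) \<open>2 * d \<le> n\<close> \<open>q \<le> d\<close> dvd_trans by (meson le_trans mult_le_mono2)
qed

lemma prime_six_mult_pm_1_iff:
  fixes x n :: nat
  assumes "0 < x" "n = 6 * x - 1 \<or> n = 6 * x + 1"
  shows "prime n \<longleftrightarrow> \<not> (\<exists>q. prime q \<and> 5 \<le> q \<and> q < 6 * x - 1 \<and> q dvd n)"
proof
  assume "prime n"
  show "\<not> (\<exists>q. prime q \<and> 5 \<le> q \<and> q < 6 * x - 1 \<and> q dvd n)"
  proof
    assume "\<exists>q. prime q \<and> 5 \<le> q \<and> q < 6 * x - 1 \<and> q dvd n"
    then obtain q where q: "prime q" "q < 6 * x - 1" "q dvd n"
      by blast
    then have "q = n"
      using \<open>prime n\<close> primes_dvd_imp_eq by blast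
    with q(2) assms(2) show False
      by linarith
  qed
next
  assume no_small_factor: "\<not> (\<exists>q. prime q \<and> 5 \<le> q \<and> q < 6 * x - 1 \<and> q dvd n)"
  show "prime n"
  proof (rule ccontr)
    assume "\<not> prime n"
    moreover have "1 < n"
      using assms by auto
    ultimately obtain q where q: "prime q" "q dvd n" "2 * q \<le> n"
      using not_prime_imp_prime_factor_le_half by blast
    have "\<not> 2 dvd n" "\<not> 3 dvd n"
      using assms by presburger+
    then have "\<not> 2 dvd q" "q \<noteq> 3"
      using q(2) dvd_trans by blast+
    then have "5 \<le> q"
      using prime_ge_2_nat[OF q(1)] by presburger
    moreover have "q < 6 * x - 1"
      using q(3) assms by linarith
    ultimately show False
      using no_small_factor q by blast
  qed
qed

theorem theorem1:
  fixes x :: nat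
  assumes "x > 0"
  shows "(prime (6 * x - 1) \<and> prime (6 * x + 1)) \<longleftrightarrow>
    \<not> (\<exists>p::nat. prime p \<and> 5 \<le> p \<and> p < 6 * x - 1 \<and>
        ([int x = - int (kappa p)] (mod int p) \<or> [int x = int (kappa p)] (mod int p)))"
proof -
  have "int (6 * x - 1) = 6 * int x - 1" "int (6 * x + 1) = 6 * int x + 1"
    using assms by auto
  then have "([int x = - int (kappa p)] (mod int p) \<or> [int x = int (kappa p)] (mod int p))
      \<longleftrightarrow> (p dvd 6 * x - 1 \<or> p dvd 6 * x + 1)" if "prime p" "5 \<le> p" for p
    using cong_kappa_iff_dvd_six_mult_pm_1[OF that, of "int x"] int_dvd_int_iff by metis
  moreover have "(prime (6 * x - 1) \<and> prime (6 * x + 1)) \<longleftrightarrow>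
      \<not> (\<exists>p. prime p \<and> 5 \<le> p \<and> p < 6 * x - 1 \<and> (p dvd 6 * x - 1 \<or> p dvd 6 * x + 1))"
    using prime_six_mult_pm_1_iff[OF assms] by blast
  ultimately show ?thesis
    by blast
qed

end
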